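(* Let $(V,\leq)$ be a countably infinite partially ordered set and let $(V,E)$ be a directed acyclic graph whose transitive closure induces $\leq$ (i.e. for $x\neq y$, $x\leq y$ if and only if there is a directed path in $(V,E)$ from $x$ to $y$). Let $\mu_1,\mu_2$ be probability measures on $V$. The following statements are equivalent: (1) $\mu_1\preceq\mu_2$; (2) there exists a coupling between $\mu_1$ and $\mu_2$ which is compatible with $\leq$; (3) there exists a finitely decomposable flow $Q$ on $(V,E)$ such that $\operatorname{div}Q=\mu_1-\mu_2$.
   Context: Digraphs have no loops. A coupling between probability measures $\mu_1,\mu_2$ on $V$ is a probability measure $\rho$ on $V\times V$ with $\sum_{y}\rho(x,y)=\mu_1(x)$ and $\sum_x\rho(x,y)=\mu_2(y)$ for all $x,y$; it is compatible with $\leq$ if $\rho(\{(x,y):x\leq y\})=1$. $\mu_1\preceq\mu_2$ means $\mathbb E_{\mu_1}(f)\leq\mathbb E_{\mu_2}(f)$ for every bounded increasing $f:V\to\mathbb R$. A flow on $(V,E)$ is a map $Q:E\to[0,+\infty)$; its divergence is $\operatorname{div}Q(x)=\sum_{y:(x,y)\in E}Q(x,y)-\sum_{y:(y,x)\in E}Q(y,x)$, defined when both series converge for every $x$. For a directed path $\gamma=(x_0,\dots,x_n)$ let $Q_\gamma(x,y)=1$ if $(x,y)=(x_i,x_{i+1})$ for some $i$ and $0$ otherwise. A path is self-avoiding if its vertices are pairwise distinct. A flow $Q$ is finitely decomposable if there exist a countable family $\{\gamma_n\}$ of finite self-avoiding directed paths in $(V,E)$ and weights $q_n\ge 0$ with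 $\sum_n q_n<+\infty$ such that $Q=\sum_n q_nQ_{\gamma_n}$ pointwise on $E$. *)

theory Defs
  imports "HOL-Probability.Probability"
begin

definition stoch_le :: "('a::order) pmf \<Rightarrow> 'a pmf \<Rightarrow> bool" where
  "stoch_le \<mu>1 \<mu>2 \<longleftrightarrow>
     (\<forall>f :: 'a \<Rightarrow> real. bounded (range f) \<longrightarrow> mono f \<longrightarrow>
        measure_pmf.expectation \<mu>1 f \<le> measure_pmf.expectation \<mu>2 f)"

definition is_coupling :: "('a \<times> 'a) pmf \<Rightarrow> 'a pmf \<Rightarrow> 'a pmf \<Rightarrow> bool" where
  "is_coupling \<rho> \<mu>1 \<mu>2 \<longleftrightarrow> map_pmf fst \<rho> = \<mu>1 \<and> map_pmf snd \<rho> = \<mu>2"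

definition order_compatible :: "(('a::order) \<times> 'a) pmf \<Rightarrow> bool" where
  "order_compatible \<rho> \<longleftrightarrow> measure_pmf.prob \<rho> {(x, y). x \<le> y} = 1"

text \<open>A flow on (V,E): nonnegative values on the edges (values off E are irrelevant).\<close>
definition is_flow :: "('a \<times> 'a) set \<Rightarrow> ('a \<Rightarrow> 'a \<Rightarrow> real) \<Rightarrow> bool" where
  "is_flow E Q \<longleftrightarrow> (\<forall>x y. (x, y) \<in> E \<longrightarrow> Q x y \<ge> 0)"

definition div_defined :: "('a \<times> 'a) set \<Rightarrow> ('a \<Rightarrow> 'a \<Rightarrow> real) \<Rightarrow> 'a \<Rightarrow> bool" where
  "div_defined E Q x \<longleftrightarrow>
     (\<lambda>y. Q x y) summable_on {y. (x, y) \<in> E} \<and> (\<lambda>y. Q y x) summable_on {y. (y, x) \<in> E}"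

definition divergence :: "('a \<times> 'a) set \<Rightarrow> ('a \<Rightarrow> 'a \<Rightarrow> real) \<Rightarrow> 'a \<Rightarrow> real" where
  "divergence E Q x = (\<Sum>\<^sub>\<infinity>y\<in>{y. (x, y) \<in> E}. Q x y) - (\<Sum>\<^sub>\<infinity>y\<in>{y. (y, x) \<in> E}. Q y x)"

definition directed_path :: "('a \<times> 'a) set \<Rightarrow> 'a list \<Rightarrow> bool" where
  "directed_path E \<gamma> \<longleftrightarrow> \<gamma> \<noteq> [] \<and> (\<forall>i. Suc i < length \<gamma> \<longrightarrow> (\<gamma> ! i, \<gamma> ! Suc i) \<in> E)"

definition self_avoiding :: "'a list \<Rightarrow> bool" where
  "self_avoiding \<gamma> \<longleftrightarrow> distinct \<gamma>"

definition path_flow :: "'a list \<Rightarrow> 'a \<Rightarrow> 'a \<Rightarrow> real" where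
  "path_flow \<gamma> x y = (if \<exists>i. Suc i < length \<gamma> \<and> \<gamma> ! i = x \<and> \<gamma> ! Suc i = y then 1 else 0)"

definition finitely_decomposable :: "('a \<times> 'a) set \<Rightarrow> ('a \<Rightarrow> 'a \<Rightarrow> real) \<Rightarrow> bool" where
  "finitely_decomposable E Q \<longleftrightarrow>
     (\<exists>(I :: nat set) (\<gamma> :: nat \<Rightarrow> 'a list) (q :: nat \<Rightarrow> real).
        (\<forall>n\<in>I. directed_path E (\<gamma> n) \<and> self_avoiding (\<gamma> n) \<and> q n \<ge> 0) \<and>
        q summable_on I \<and>
        (\<forall>x y. (x, y) \<in> E \<longrightarrow> ((\<lambda>n. q n * path_flow (\<gamma> n) x y) has_sum Q x y) I))"

end

theory Submission
  imports Defs
begin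

text \<open>
  (1) \<Longrightarrow> (2) is Strassen's theorem for discrete measures. For a finite set F, lumping all mass
  outside F into one extra point that is related to everything gives a finite supply-demand
  problem whose Hall condition (the mass of A under \<open>\<mu>1\<close> is at most the mass of the up-set of A
  under \<open>\<mu>2\<close>) is stochastic domination; it is solved by pushing mass along edges until a source,
  a sink or a set of sources becomes tight. The resulting approximate couplings satisfy their
  marginal constraints up to the tail masses outside F. These are closed conditions on the
  compact cube of [0,1]-valued functions on V \<times> V and they shrink as F grows, so some r satisfies
  all of them; r is then a coupling supported on the pairs x \<le> y.
  (2) \<Longrightarrow> (3): route the mass \<open>\<rho>(x, y)\<close> along a directed path from x to y; the divergence of the
  superposition is the difference of the marginals.
  (3) \<Longrightarrow> (1): summing a bounded f against the divergence path by path gives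
  \<open>E\<^sub>\<mu>\<^sub>1 f - E\<^sub>\<mu>\<^sub>2 f\<close> as the sum of \<open>q\<^sub>\<gamma> (f(start \<gamma>) - f(end \<gamma>))\<close>, which is nonpositive for
  increasing f because directed paths go up in the order.
\<close>

section \<open>Finite transport problems\<close>

definition neighbours :: "('s \<Rightarrow> 't \<Rightarrow> bool) \<Rightarrow> 't set \<Rightarrow> 's set \<Rightarrow> 't set" where
  "neighbours R T A = {t\<in>T. \<exists>s\<in>A. R s t}"

definition transport_feasible ::
    "'s set \<Rightarrow> 't set \<Rightarrow> ('s \<Rightarrow> 't \<Rightarrow> bool) \<Rightarrow> ('s \<Rightarrow> real) \<Rightarrow> ('t \<Rightarrow> real) \<Rightarrow> bool" where
  "transport_feasible S T R a b \<longleftrightarrow> finite S \<and> finite T \<and> (\<forall>s\<in>S. 0 \<le> a s) \<and> (\<forall>t\<in>T. 0 \<le> b t)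
     \<and> sum a S = sum b T \<and> (\<forall>A\<subseteq>S. sum a A \<le> sum b (neighbours R T A))"

definition transport_plan :: "'s set \<Rightarrow> 't set \<Rightarrow> ('s \<Rightarrow> 't \<Rightarrow> bool) \<Rightarrow> ('s \<Rightarrow> real) \<Rightarrow>
    ('t \<Rightarrow> real) \<Rightarrow> ('s \<Rightarrow> 't \<Rightarrow> real) \<Rightarrow> bool" where
  "transport_plan S T R a b f \<longleftrightarrow> (\<forall>s t. 0 \<le> f s t)
     \<and> (\<forall>s t. f s t \<noteq> 0 \<longrightarrow> s \<in> S \<and> t \<in> T \<and> R s t)
     \<and> (\<forall>s\<in>S. sum (f s) T = a s) \<and> (\<forall>t\<in>T. (\<Sum>s\<in>S. f s t) = b t)"

text \<open>The hypothesis of the strong induction on \<open>card S + card T\<close> in \<open>transport_exists\<close>.\<close>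

definition transport_solvable_below :: "nat \<Rightarrow> ('s \<Rightarrow> 't \<Rightarrow> bool) \<Rightarrow> bool" where
  "transport_solvable_below n R \<longleftrightarrow> (\<forall>(S::'s set) (T::'t set) a b.
     card S + card T < n \<longrightarrow> transport_feasible S T R a b \<longrightarrow> (\<exists>f. transport_plan S T R a b f))"

lemma transport_planI:
  assumes "\<And>s t. 0 \<le> f s t" "\<And>s t. f s t \<noteq> 0 \<Longrightarrow> s \<in> S \<and> t \<in> T \<and> R s t"
    "\<And>s. s \<in> S \<Longrightarrow> sum (f s) T = a s" "\<And>t. t \<in> T \<Longrightarrow> (\<Sum>s\<in>S. f s t) = b t"
  shows "transport_plan S T R a b f"
  using assms unfolding transport_plan_def by blast

lemma transport_planD:
  assumes "transport_plan S T R a b f"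
  shows "0 \<le> f s t" and "f s t \<noteq> 0 \<Longrightarrow> s \<in> S \<and> t \<in> T \<and> R s t"
    and "s \<in> S \<Longrightarrow> sum (f s) T = a s" and "t \<in> T \<Longrightarrow> (\<Sum>s\<in>S. f s t) = b t"
  using assms unfolding transport_plan_def by blast+

lemma transport_plan_outside:
  assumes "transport_plan S T R a b f" "s \<notin> S \<or> t \<notin> T"
  shows "f s t = 0"
  using transport_planD(2)[OF assms(1)] assms(2) by blast

lemma transport_remove_empty_source:
  assumes IH: "transport_solvable_below (card S + card T) R" and v: "transport_feasible S T R a b"
    and s: "s \<in> S" "a s = 0"
  shows "\<exists>f. transport_plan S T R a b f"
proof -
  have fin: "finite S" "finite T" using v by (auto simp: transport_feasible_def)
  have "transport_feasible (S - {s}) T R a b"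
    using v s unfolding transport_feasible_def by (auto simp: sum_diff1)
  moreover have "card (S - {s}) + card T < card S + card T"
    using card_Diff1_less[OF fin(1) s(1)] by simp
  ultimately obtain f where f: "transport_plan (S - {s}) T R a b f"
    using IH unfolding transport_solvable_below_def by blast
  have fs: "f s t = 0" for t by (rule transport_plan_outside[OF f]) simp
  have "transport_plan S T R a b f"
  proof (rule transport_planI)
    show "sum (f x) T = a x" if "x \<in> S" for x
      using transport_planD(3)[OF f] that s fs by (cases "x = s") auto
    show "(\<Sum>x\<in>S. f x y) = b y" if "y \<in> T" for y
      using transport_planD(4)[OF f] that s fin fs by (simp add: sum.remove)
  qed (use transport_planD[OF f] in auto)
  then show ?thesis by blast
qed

lemma transport_remove_empty_sink:
  assumes IH: "transport_solvable_below (card S + card T) R" and v: "transport_feasible S T R a b"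
    and t: "t \<in> T" "b t = 0"
  shows "\<exists>f. transport_plan S T R a b f"
proof -
  have fin: "finite S" "finite T" using v by (auto simp: transport_feasible_def)
  have "neighbours R (T - {t}) A = neighbours R T A - {t}" for A by (auto simp: neighbours_def)
  then have "transport_feasible S (T - {t}) R a b"
    using v t fin unfolding transport_feasible_def by (auto simp: sum_diff1 neighbours_def)
  moreover have "card S + card (T - {t}) < card S + card T"
    using card_Diff1_less[OF fin(2) t(1)] by simp
  ultimately obtain f where f: "transport_plan S (T - {t}) R a b f"
    using IH unfolding transport_solvable_below_def by blast
  have ft: "f s t = 0" for s by (rule transport_plan_outside[OF f]) simp
  have "transport_plan S T R a b f"
  proof (rule transport_planI)
    show "(\<Sum>x\<in>S. f x y) = b y" if "y \<in> T" for y
      using transport_planD(4)[OF f] that t ft by (cases "y = t") auto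
    show "sum (f x) T = a x" if "x \<in> S" for x
      using transport_planD(3)[OF f] that t fin ft by (simp add: sum.remove)
  qed (use transport_planD[OF f] in auto)
  then show ?thesis by blast
qed

lemma transport_feasible_tight_split:
  assumes v: "transport_feasible S T R a b"
    and A: "A \<subseteq> S" "sum a A = sum b (neighbours R T A)"
  defines "N \<equiv> neighbours R T A"
  shows "transport_feasible A N R a b" and "transport_feasible (S - A) (T - N) R a b"
proof -
  have fin: "finite S" "finite T" using v by (auto simp: transport_feasible_def)
  have finA: "finite A" using A(1) fin(1) by (rule finite_subset)
  have NT: "N \<subseteq> T" by (auto simp: N_def neighbours_def)
  show "transport_feasible A N R a b"
    unfolding transport_feasible_def
  proof (intro conjI allI impI ballI)
    show "finite N" using NT fin(2) by (rule finite_subset)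
    show "sum a B \<le> sum b (neighbours R N B)" if "B \<subseteq> A" for B
    proof -
      have "neighbours R N B = neighbours R T B" using that by (auto simp: neighbours_def N_def)
      then show ?thesis using v that A by (auto simp: transport_feasible_def)
    qed
  qed (use v A NT finA in \<open>auto simp: transport_feasible_def N_def\<close>)
  show "transport_feasible (S - A) (T - N) R a b"
    unfolding transport_feasible_def
  proof (intro conjI allI impI ballI)
    show "sum a (S - A) = sum b (T - N)"
      using v A NT fin by (simp add: sum_diff transport_feasible_def N_def)
    show "sum a B \<le> sum b (neighbours R (T - N) B)" if B: "B \<subseteq> S - A" for B
    proof -
      have finB: "finite B" using B fin finite_subset by blast
      have "sum a A + sum a B = sum a (A \<union> B)"
        using B finA finB by (subst sum.union_disjoint) auto
      also have "\<dots> \<le> sum b (neighbours R T (A \<union> B))"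
        using v A(1) B unfolding transport_feasible_def by (meson Diff_subset Un_least subset_trans)
      also have "neighbours R T (A \<union> B) = N \<union> neighbours R (T - N) B"
        by (auto simp: neighbours_def N_def)
      also have "sum b \<dots> = sum b N + sum b (neighbours R (T - N) B)"
        using fin NT by (subst sum.union_disjoint) (auto simp: neighbours_def intro: finite_subset)
      finally show ?thesis using A by (simp add: N_def)
    qed
  qed (use v in \<open>auto simp: transport_feasible_def\<close>)
qed

lemma transport_plan_combine:
  assumes f1: "transport_plan A N R a b f1" and f2: "transport_plan (S - A) (T - N) R a b f2"
    and sub: "A \<subseteq> S" "N \<subseteq> T" and fin: "finite S" "finite T"
  shows "transport_plan S T R a b (\<lambda>s t. f1 s t + f2 s t)"
proof (rule transport_planI)
  show "0 \<le> f1 x y + f2 x y" for x y using transport_planD(1)[OF f1] transport_planD(1)[OF f2]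
    by simp
  show "x \<in> S \<and> y \<in> T \<and> R x y" if "f1 x y + f2 x y \<noteq> 0" for x y
  proof -
    have "f1 x y \<noteq> 0 \<or> f2 x y \<noteq> 0" using that by auto
    then show ?thesis using transport_planD(2)[OF f1] transport_planD(2)[OF f2] sub by blast
  qed
  show "sum (\<lambda>t. f1 x t + f2 x t) T = a x" if "x \<in> S" for x
  proof -
    have "sum (\<lambda>t. f1 x t + f2 x t) T = sum (f1 x) N + sum (f2 x) (T - N)"
      using fin sub transport_plan_outside[OF f1] transport_plan_outside[OF f2]
      by (simp add: sum.distrib sum.mono_neutral_right[of T N] sum.mono_neutral_right[of T "T - N"])
    moreover have "sum (f1 x) N = (if x \<in> A then a x else 0)"
      using transport_planD(3)[OF f1] transport_plan_outside[OF f1] by simp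
    moreover have "sum (f2 x) (T - N) = (if x \<in> A then 0 else a x)"
      using transport_planD(3)[OF f2] transport_plan_outside[OF f2] that by simp
    ultimately show ?thesis by simp
  qed
  show "(\<Sum>s\<in>S. f1 s y + f2 s y) = b y" if "y \<in> T" for y
  proof -
    have "(\<Sum>s\<in>S. f1 s y + f2 s y) = (\<Sum>s\<in>A. f1 s y) + (\<Sum>s\<in>S - A. f2 s y)"
      using fin sub transport_plan_outside[OF f1] transport_plan_outside[OF f2]
      by (simp add: sum.distrib sum.mono_neutral_right[of S A] sum.mono_neutral_right[of S "S - A"])
    moreover have "(\<Sum>s\<in>A. f1 s y) = (if y \<in> N then b y else 0)"
      using transport_planD(4)[OF f1] transport_plan_outside[OF f1] by simp
    moreover have "(\<Sum>s\<in>S - A. f2 s y) = (if y \<in> N then 0 else b y)"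
      using transport_planD(4)[OF f2] transport_plan_outside[OF f2] that by simp
    ultimately show ?thesis by simp
  qed
qed

lemma transport_split_tight_set:
  assumes IH: "transport_solvable_below (card S + card T) R" and v: "transport_feasible S T R a b"
    and A: "A \<subseteq> S" "A \<noteq> {}" "A \<noteq> S" "sum a A = sum b (neighbours R T A)"
  shows "\<exists>f. transport_plan S T R a b f"
proof -
  define N where "N = neighbours R T A"
  have fin: "finite S" "finite T" using v by (auto simp: transport_feasible_def)
  have NT: "N \<subseteq> T" by (auto simp: N_def neighbours_def)
  have "card A < card S" "card (S - A) < card S" using A fin by (auto intro!: psubset_card_mono)
  moreover have "card N \<le> card T" "card (T - N) \<le> card T" using NT fin(2)
    by (auto intro!: card_mono)
  ultimately have "card A + card N < card S + card T"
    and "card (S - A) + card (T - N) < card S + card T"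
    by linarith+
  then obtain f1 f2 where "transport_plan A N R a b f1" "transport_plan (S - A) (T - N) R a b f2"
    using IH transport_feasible_tight_split[OF v A(1,4)]
      unfolding transport_solvable_below_def N_def
    by meson
  then show ?thesis using transport_plan_combine A(1) NT fin by blast
qed

text \<open>Stated with \<open>if\<close>, the form the simplifier gives to \<open>sum (a(s := a s - e)) A\<close>.\<close>

lemma sum_fun_upd_minus:
  fixes a :: "'x \<Rightarrow> 'b::ab_group_add"
  assumes "finite A"
  shows "(\<Sum>x\<in>A. if x = s then a s - e else a x) = sum a A - (if s \<in> A then e else 0)"
proof (cases "s \<in> A")
  case True
  have "(\<Sum>x\<in>A. if x = s then a s - e else a x) = (a s - e) + (\<Sum>x\<in>A - {s}. a x)"
    using assms True by (simp add: sum.remove)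
  also have "\<dots> = sum a A - e" using assms True by (simp add: sum.remove)
  finally show ?thesis using True by simp
qed (auto intro: sum.cong)

lemma transport_feasible_push:
  assumes v: "transport_feasible S T R a b" and st: "s \<in> S" "t \<in> T" "R s t"
    and e: "e \<le> a s" "e \<le> b t"
    and slack: "\<And>A. A \<subseteq> S \<Longrightarrow> s \<notin> A \<Longrightarrow> t \<in> neighbours R T A \<Longrightarrow>
                  e \<le> sum b (neighbours R T A) - sum a A"
  shows "transport_feasible S T R (a(s := a s - e)) (b(t := b t - e))"
  unfolding transport_feasible_def
proof (intro conjI allI impI ballI)
  have fin: "finite S" "finite T" using v by (auto simp: transport_feasible_def)
  then show "finite S" "finite T" .
  show "sum (a(s := a s - e)) S = sum (b(t := b t - e)) T"
    using v st fin by (simp add: sum_fun_upd_minus transport_feasible_def)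
  show "sum (a(s := a s - e)) A \<le> sum (b(t := b t - e)) (neighbours R T A)" if A: "A \<subseteq> S" for A
  proof -
    have "finite A" "finite (neighbours R T A)" using A fin
      by (auto intro: finite_subset simp: neighbours_def)
    moreover have "s \<in> A \<Longrightarrow> t \<in> neighbours R T A" using st by (auto simp: neighbours_def)
    moreover have "sum a A \<le> sum b (neighbours R T A)" using v A
      by (simp add: transport_feasible_def)
    ultimately show ?thesis using slack[OF A] by (auto simp: sum_fun_upd_minus)
  qed
qed (use v e in \<open>auto simp: transport_feasible_def\<close>)

lemma transport_plan_add_edge:
  assumes f: "transport_plan S T R (a(s := a s - e)) (b(t := b t - e)) f"
    and fin: "finite S" "finite T" and st: "s \<in> S" "t \<in> T" "R s t" and e: "0 \<le> e"
  shows "transport_plan S T R a b (\<lambda>x y. f x y + (if x = s \<and> y = t then e else 0))"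
proof (rule transport_planI)
  show "0 \<le> f x y + (if x = s \<and> y = t then e else 0)" for x y using transport_planD(1)[OF f] e
    by simp
  show "x \<in> S \<and> y \<in> T \<and> R x y" if "f x y + (if x = s \<and> y = t then e else 0) \<noteq> 0" for x y
    using that transport_planD(2)[OF f] st by (cases "x = s \<and> y = t") auto
  show "(\<Sum>y\<in>T. f x y + (if x = s \<and> y = t then e else 0)) = a x" if "x \<in> S" for x
    using transport_planD(3)[OF f that] fin st by (simp add: sum.distrib)
  show "(\<Sum>x\<in>S. f x y + (if x = s \<and> y = t then e else 0)) = b y" if "y \<in> T" for y
    using transport_planD(4)[OF f that] fin st by (simp add: sum.distrib)
qed

text \<open>
  Push the largest amount e along the edge from s to t that keeps the Hall condition. At the
  bottleneck, s or t is emptied or some set of sources avoiding s becomes tight, so the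
  reduced problem falls under one of the three reductions above.
\<close>

lemma transport_push_along_edge:
  assumes IH: "transport_solvable_below (card S + card T) R" and v: "transport_feasible S T R a b"
    and st: "s \<in> S" "t \<in> T" "R s t"
  shows "\<exists>f. transport_plan S T R a b f"
proof -
  have fin: "finite S" "finite T" using v by (auto simp: transport_feasible_def)
  have hall: "\<And>A. A \<subseteq> S \<Longrightarrow> sum a A \<le> sum b (neighbours R T A)"
    and nonneg: "0 \<le> a s" "0 \<le> b t"
    using v st by (auto simp: transport_feasible_def)
  define slacks where "slacks = (\<lambda>A. sum b (neighbours R T A) - sum a A) `
    {A. A \<subseteq> S \<and> s \<notin> A \<and> t \<in> neighbours R T A}"
  define K where "K = {a s, b t} \<union> slacks"
  define e where "e = Min K"
  have fin_K: "finite K" unfolding K_def slacks_def using fin by simp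
  have e_le: "\<And>c. c \<in> K \<Longrightarrow> e \<le> c" unfolding e_def using fin_K by (rule Min_le)
  have e_in: "e \<in> K" unfolding e_def using fin_K by (rule Min_in) (simp add: K_def)
  have "0 \<le> c" if "c \<in> K" for c
    using that nonneg hall unfolding K_def slacks_def by force
  then have "0 \<le> e" using e_in by blast
  have v': "transport_feasible S T R (a(s := a s - e)) (b(t := b t - e))"
    by (rule transport_feasible_push[OF v st]) (auto simp: K_def slacks_def intro: e_le)
  have "\<exists>f. transport_plan S T R (a(s := a s - e)) (b(t := b t - e)) f"
    using e_in unfolding K_def
  proof (elim UnE insertE)
    assume "e = a s"
    then show ?thesis using transport_remove_empty_source[OF IH v' st(1)] by simp
  next
    assume "e = b t"
    then show ?thesis using transport_remove_empty_sink[OF IH v' st(2)] by simp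
  next
    assume "e \<in> slacks"
    then obtain A where A: "A \<subseteq> S" "s \<notin> A" "t \<in> neighbours R T A"
      and e_eq: "e = sum b (neighbours R T A) - sum a A" unfolding slacks_def by blast
    have "A \<noteq> {}" "A \<noteq> S" using A st(1) by (auto simp: neighbours_def)
    moreover have "finite A" "finite (neighbours R T A)"
      using A fin by (auto intro: finite_subset simp: neighbours_def)
    ultimately show ?thesis
      using transport_split_tight_set[OF IH v' A(1)] A e_eq by (simp add: sum_fun_upd_minus)
  qed simp
  then obtain f where "transport_plan S T R (a(s := a s - e)) (b(t := b t - e)) f" ..
  from transport_plan_add_edge[OF this fin st \<open>0 \<le> e\<close>] show ?thesis by blast
qed

lemma transport_step:
  assumes IH: "transport_solvable_below (card S + card T) R" and v: "transport_feasible S T R a b"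
  shows "\<exists>f. transport_plan S T R a b f"
proof -
  have fin: "finite S" "finite T" using v by (auto simp: transport_feasible_def)
  consider "S = {}" | s where "s \<in> S" "a s = 0" | s where "s \<in> S" "a s \<noteq> 0" by blast
  then show ?thesis
  proof cases
    case 1
    then have "sum b T = 0" "\<forall>t\<in>T. 0 \<le> b t" using v by (auto simp: transport_feasible_def)
    then have "\<forall>t\<in>T. b t = 0" using fin(2) sum_nonneg_eq_0_iff by blast
    then have "transport_plan S T R a b (\<lambda>_ _. 0)" using 1 by (intro transport_planI) auto
    then show ?thesis by blast
  next
    case 2
    then show ?thesis using transport_remove_empty_source[OF IH v] by blast
  next
    case (3 s)
    then have "0 < a s" using v by (auto simp: transport_feasible_def order.order_iff_strict)
    also have "a s \<le> sum b (neighbours R T {s})" using v 3 by (auto simp: transport_feasible_def)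
    finally have "neighbours R T {s} \<noteq> {}" by auto
    then obtain t where "t \<in> T" "R s t" by (auto simp: neighbours_def)
    then show ?thesis using transport_push_along_edge[OF IH v 3(1)] by blast
  qed
qed

lemma transport_exists:
  assumes "transport_feasible S T R a b"
  shows "\<exists>f. transport_plan S T R a b f"
  using assms
proof (induction "card S + card T" arbitrary: S T a b rule: less_induct)
  case less
  then show ?case by (intro transport_step) (auto simp: transport_solvable_below_def)
qed

lemma transport_plan_transpose:
  "transport_plan S T R a b f \<Longrightarrow> transport_plan T S (\<lambda>t s. R s t) b a (\<lambda>t s. f s t)"
  unfolding transport_plan_def by auto

lemma transport_plan_le_target:
  assumes f: "transport_plan S T R a b f" and "finite S" "s \<in> S" "t \<in> T"
  shows "f s t \<le> b t"
proof -
  have "f s t \<le> (\<Sum>s'\<in>S. f s' t)" using assms by (intro member_le_sum transport_planD(1)[OF f])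
  also have "\<dots> = b t" using transport_planD(4)[OF f] assms(4) .
  finally show ?thesis .
qed

section \<open>Strassen's theorem for discrete measures\<close>

lemma pmf_summable_on: "pmf p summable_on A"
  using pmf_abs_summable abs_summable_equivalent abs_summable_summable by blast

lemma measure_pmf_eq_infsum: "measure_pmf.prob p A = (\<Sum>\<^sub>\<infinity>x\<in>A. pmf p x)"
  using measure_pmf_conv_infsetsum[of p A] infsetsum_infsum[OF pmf_abs_summable, of p A] by simp

lemma has_sum_pmf: "(pmf p has_sum measure_pmf.prob p A) A"
  unfolding measure_pmf_eq_infsum using pmf_summable_on
    by (rule summable_iff_has_sum_infsum[THEN iffD1])

lemma measure_pmf_Compl: "measure_pmf.prob p (- A) = 1 - measure_pmf.prob p A"
  using measure_pmf.prob_compl[of A p] by (simp add: Compl_eq_Diff_UNIV)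

lemma measure_pmf_Compl_small:
  assumes "e > 0"
  shows "\<exists>G. finite G \<and> measure_pmf.prob p (- G) \<le> e"
proof -
  obtain G where G: "finite G" "dist (sum (pmf p) G) (\<Sum>\<^sub>\<infinity>x. pmf p x) \<le> e"
    using infsum_finite_approximation[OF pmf_summable_on[of p UNIV] assms] by auto
  have "(\<Sum>\<^sub>\<infinity>x. pmf p x) = 1" using measure_pmf_eq_infsum[of p UNIV] by simp
  moreover have "measure_pmf.prob p (- G) = 1 - sum (pmf p) G"
    using G(1) by (simp add: measure_pmf_Compl measure_measure_pmf_finite)
  ultimately have "measure_pmf.prob p (- G) \<le> e" using G(2) by (simp add: dist_real_def)
  then show ?thesis using G(1) by blast
qed

text \<open>
  The mass outside a finite set F is lumped into \<open>None\<close>, which \<open>tail_rel\<close> relates to everything.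
\<close>

definition lump_tail :: "'a pmf \<Rightarrow> 'a set \<Rightarrow> 'a option \<Rightarrow> real" where
  "lump_tail p F z = (case z of None \<Rightarrow> measure_pmf.prob p (- F) | Some x \<Rightarrow> pmf p x)"

definition tail_rel :: "('a \<Rightarrow> 'b \<Rightarrow> bool) \<Rightarrow> 'a option \<Rightarrow> 'b option \<Rightarrow> bool" where
  "tail_rel R z z' = (case (z, z') of (Some x, Some y) \<Rightarrow> R x y | _ \<Rightarrow> True)"

lemma sum_Some_image: "sum g (Some ` F) = (\<Sum>x\<in>F. g (Some x))"
  by (simp add: sum.reindex)

lemma lump_tail_nonneg: "0 \<le> lump_tail p F z"
  by (cases z) (auto simp: lump_tail_def)

lemma sum_lump_tail:
  "finite F \<Longrightarrow> sum (lump_tail p F) (insert None (Some ` F)) = 1"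
  by (simp add: sum_Some_image lump_tail_def measure_pmf_Compl measure_measure_pmf_finite)

lemma lumped_transport_feasible:
  assumes hall: "\<And>A. finite A \<Longrightarrow> measure_pmf.prob p A \<le> measure_pmf.prob q {y. \<exists>x\<in>A. R x y}"
    and F: "finite F"
  shows "transport_feasible (insert None (Some ` F)) (insert None (Some ` F)) (tail_rel R)
           (lump_tail p F) (lump_tail q F)"
  unfolding transport_feasible_def
proof (intro conjI ballI allI impI)
  let ?S = "insert None (Some ` F)"
  have total: "sum (lump_tail p F) ?S = 1" "sum (lump_tail q F) ?S = 1"
    using F by (simp_all only: sum_lump_tail)
  then show "sum (lump_tail p F) ?S = sum (lump_tail q F) ?S" by simp
  show "sum (lump_tail p F) A \<le> sum (lump_tail q F) (neighbours (tail_rel R) ?S A)"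
    if A: "A \<subseteq> ?S" for A
  proof (cases "None \<in> A")
    case True
    then have "neighbours (tail_rel R) ?S A = ?S"
      by (auto simp: neighbours_def tail_rel_def intro: bexI[of _ None])
    moreover have "sum (lump_tail p F) A \<le> sum (lump_tail p F) ?S"
      using A F by (intro sum_mono2) (auto simp: lump_tail_nonneg)
    ultimately show ?thesis using total by simp
  next
    case False
    define B where "B = {x\<in>F. Some x \<in> A}"
    define U where "U = {y. \<exists>x\<in>B. R x y}"
    have A_eq: "A = Some ` B" using A False by (auto simp: B_def)
    show ?thesis
    proof (cases "B = {}")
      case True
      then show ?thesis using A_eq by (simp add: sum_nonneg lump_tail_nonneg)
    next
      case B_ne: False
      have N_eq: "neighbours (tail_rel R) ?S A = insert None (Some ` (U \<inter> F))"
        using B_ne by (auto simp: neighbours_def tail_rel_def A_eq U_def split: option.splits)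
      have "finite B" using F by (simp add: B_def)
      have "sum (lump_tail p F) A = sum (pmf p) B" by (simp add: A_eq sum_Some_image lump_tail_def)
      also have "\<dots> = measure_pmf.prob p B" using \<open>finite B\<close>
        by (rule measure_measure_pmf_finite[symmetric])
      also have "\<dots> \<le> measure_pmf.prob q U" unfolding U_def using \<open>finite B\<close> by (rule hall)
      also have "\<dots> \<le> measure_pmf.prob q (U \<inter> F \<union> - F)"
        by (rule measure_pmf.finite_measure_mono) auto
      also have "\<dots> = measure_pmf.prob q (U \<inter> F) + measure_pmf.prob q (- F)"
        by (rule measure_pmf.finite_measure_Union) auto
      also have "\<dots> = sum (pmf q) (U \<inter> F) + lump_tail q F None"
        using F by (simp add: measure_measure_pmf_finite lump_tail_def)
      also have "\<dots> = sum (lump_tail q F) (neighbours (tail_rel R) ?S A)"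
        using F by (simp add: N_eq sum_Some_image lump_tail_def)
      finally show ?thesis .
    qed
  qed
qed (use F in \<open>auto simp: lump_tail_nonneg\<close>)

definition tails :: "'a pmf \<Rightarrow> 'a pmf \<Rightarrow> 'a set \<Rightarrow> real" where
  "tails p q G = measure_pmf.prob p (- G) + measure_pmf.prob q (- G)"

definition truncate_plan :: "'a set \<Rightarrow> ('a option \<Rightarrow> 'a option \<Rightarrow> real) \<Rightarrow> 'a \<times> 'a \<Rightarrow> real" where
  "truncate_plan F g z = (if fst z \<in> F \<and> snd z \<in> F then g (Some (fst z)) (Some (snd z)) else 0)"

lemma tails_nonneg: "0 \<le> tails p q G"
  by (simp add: tails_def)

lemma lumped_plan_row_bounds:
  assumes g: "transport_plan (insert None (Some ` F)) (insert None (Some ` F)) Rel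
      (lump_tail p F) (lump_tail q F) g"
    and F: "finite F" and G: "finite G"
  shows "(\<Sum>y\<in>G. truncate_plan F g (x, y)) \<le> pmf p x"
    and "pmf p x - tails p q G - tails p q F \<le> (\<Sum>y\<in>G. truncate_plan F g (x, y))"
proof -
  have g_nonneg: "0 \<le> g u v" for u v using transport_planD(1)[OF g] .
  have "(\<Sum>y\<in>G. truncate_plan F g (x, y)) \<le> pmf p x \<and>
      pmf p x - tails p q G - tails p q F \<le> (\<Sum>y\<in>G. truncate_plan F g (x, y))"
  proof (cases "x \<in> F")
    case False
    then have "pmf p x \<le> measure_pmf.prob p (- F)"
      using measure_pmf.finite_measure_mono[of "{x}" "- F" p] by (simp add: measure_pmf_single)
    then have "pmf p x \<le> tails p q F" unfolding tails_def by (simp add: add_increasing2)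
    then show ?thesis using False tails_nonneg[of p q G] by (simp add: truncate_plan_def)
  next
    case True
    have trunc: "(\<Sum>y\<in>G. truncate_plan F g (x, y)) = (\<Sum>y\<in>G \<inter> F. g (Some x) (Some y))"
      using G True by (simp add: truncate_plan_def sum.If_cases Int_commute)
    have "g (Some x) None + (\<Sum>y\<in>F. g (Some x) (Some y)) = pmf p x"
      using transport_planD(3)[OF g, of "Some x"] F True by (simp add: sum_Some_image lump_tail_def)
    moreover have "(\<Sum>y\<in>F. g (Some x) (Some y)) =
        (\<Sum>y\<in>G \<inter> F. g (Some x) (Some y)) + (\<Sum>y\<in>F - G. g (Some x) (Some y))"
      using F by (metis Diff_Int2 Int_commute inf.idem sum.Int_Diff)
    moreover have "g (Some x) None \<le> measure_pmf.prob q (- F)"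
      using transport_plan_le_target[OF g, of "Some x" None] F True by (simp add: lump_tail_def)
    moreover have "(\<Sum>y\<in>F - G. g (Some x) (Some y)) \<le> measure_pmf.prob q (- G)"
    proof -
      have "(\<Sum>y\<in>F - G. g (Some x) (Some y)) \<le> (\<Sum>y\<in>F - G. pmf q y)"
        using transport_plan_le_target[OF g, of "Some x" "Some _"] F True
        by (intro sum_mono) (simp add: lump_tail_def)
      also have "\<dots> = measure_pmf.prob q (F - G)" using F by (simp add: measure_measure_pmf_finite)
      also have "\<dots> \<le> measure_pmf.prob q (- G)" by (rule measure_pmf.finite_measure_mono) auto
      finally show ?thesis .
    qed
    moreover have "0 \<le> g (Some x) None" "0 \<le> (\<Sum>y\<in>F - G. g (Some x) (Some y))"
      by (simp_all add: g_nonneg sum_nonneg)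
    ultimately show ?thesis unfolding trunc tails_def by (smt (verit) measure_nonneg)
  qed
  then show "(\<Sum>y\<in>G. truncate_plan F g (x, y)) \<le> pmf p x"
    and "pmf p x - tails p q G - tails p q F \<le> (\<Sum>y\<in>G. truncate_plan F g (x, y))" by auto
qed

lemma truncate_plan_transpose: "truncate_plan F (\<lambda>t s. g s t) (y, x) = truncate_plan F g (x, y)"
  by (auto simp: truncate_plan_def)

lemma tails_commute: "tails q p G = tails p q G"
  by (simp add: tails_def)

lemma tails_antimono: "F \<subseteq> F' \<Longrightarrow> tails p q F' \<le> tails p q F"
  unfolding tails_def by (intro add_mono measure_pmf.finite_measure_mono) auto

text \<open>
  A lower bound on a full row sum is not a closed condition in the product topology; a lower
  bound on every finite partial sum up to the tails outside it is, and it still forces the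
  exact marginals when it holds for all F.
\<close>

definition approx_couplings :: "'a pmf \<Rightarrow> 'a pmf \<Rightarrow> ('a \<Rightarrow> 'a \<Rightarrow> bool) \<Rightarrow> 'a set \<Rightarrow> ('a \<times> 'a \<Rightarrow> real) set"
  where "approx_couplings p q R F = {r. (\<forall>z. 0 \<le> r z) \<and> (\<forall>x y. \<not> R x y \<longrightarrow> r (x, y) = 0)
     \<and> (\<forall>x G. finite G \<longrightarrow> (\<Sum>y\<in>G. r (x, y)) \<le> pmf p x
                          \<and> pmf p x - tails p q G - tails p q F \<le> (\<Sum>y\<in>G. r (x, y)))
     \<and> (\<forall>y G. finite G \<longrightarrow> (\<Sum>x\<in>G. r (x, y)) \<le> pmf q y
                          \<and> pmf q y - tails p q G - tails p q F \<le> (\<Sum>x\<in>G. r (x, y)))}"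

lemma approx_couplingsD:
  assumes "r \<in> approx_couplings p q R F"
  shows "0 \<le> r z" and "\<not> R x y \<Longrightarrow> r (x, y) = 0"
    and "finite G \<Longrightarrow> (\<Sum>y\<in>G. r (x, y)) \<le> pmf p x"
    and "finite G \<Longrightarrow> pmf p x - tails p q G - tails p q F \<le> (\<Sum>y\<in>G. r (x, y))"
    and "finite G \<Longrightarrow> (\<Sum>x\<in>G. r (x, y)) \<le> pmf q y"
    and "finite G \<Longrightarrow> pmf q y - tails p q G - tails p q F \<le> (\<Sum>x\<in>G. r (x, y))"
  using assms unfolding approx_couplings_def mem_Collect_eq by blast+

lemma approx_couplings_nonempty:
  assumes hall: "\<And>A. finite A \<Longrightarrow> measure_pmf.prob p A \<le> measure_pmf.prob q {y. \<exists>x\<in>A. R x y}"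
    and F: "finite F"
  shows "\<exists>r. r \<in> approx_couplings p q R F"
proof -
  let ?S = "insert None (Some ` F)"
  obtain g where g: "transport_plan ?S ?S (tail_rel R) (lump_tail p F) (lump_tail q F) g"
    using transport_exists[OF lumped_transport_feasible[OF hall F]] by blast
  note g' = transport_plan_transpose[OF g]
  have "truncate_plan F g \<in> approx_couplings p q R F"
    unfolding approx_couplings_def
  proof (intro CollectI conjI allI impI)
    show "0 \<le> truncate_plan F g z" for z
      using transport_planD(1)[OF g] by (simp add: truncate_plan_def)
  next
    show "truncate_plan F g (x, y) = 0" if "\<not> R x y" for x y
      using transport_planD(2)[OF g, of "Some x" "Some y"] that
        by (auto simp: truncate_plan_def tail_rel_def)
  next
    fix x y :: 'a and G :: "'a set" assume G: "finite G"
    show "(\<Sum>y\<in>G. truncate_plan F g (x, y)) \<le> pmf p x"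
      "pmf p x - tails p q G - tails p q F \<le> (\<Sum>y\<in>G. truncate_plan F g (x, y))"
      using lumped_plan_row_bounds[OF g F G] by blast+
    show "(\<Sum>x\<in>G. truncate_plan F g (x, y)) \<le> pmf q y"
      "pmf q y - tails p q G - tails p q F \<le> (\<Sum>x\<in>G. truncate_plan F g (x, y))"
      using lumped_plan_row_bounds[OF g' F G, of y]
        by (simp_all add: truncate_plan_transpose[of F g] tails_commute)
  qed
  then show ?thesis by blast
qed

lemma closed_approx_couplings: "closed (approx_couplings p q R F)"
  unfolding approx_couplings_def
  by (intro closed_Collect_conj closed_Collect_all closed_Collect_imp open_Collect_const
      closed_Collect_le closed_Collect_eq continuous_on_sum continuous_on_const
      continuous_on_product_coordinates)

lemma approx_couplings_antimono:
  assumes "F \<subseteq> F'"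
  shows "approx_couplings p q R F' \<subseteq> approx_couplings p q R F"
proof
  fix r assume "r \<in> approx_couplings p q R F'"
  then show "r \<in> approx_couplings p q R F"
    using tails_antimono[OF assms, of p q] unfolding approx_couplings_def mem_Collect_eq
    by (smt (verit))
qed

lemma compact_unit_cube: "compact (PiE UNIV (\<lambda>_. {0..1::real}) :: ('b \<Rightarrow> real) set)"
proof -
  have "compactin (product_topology (\<lambda>_. euclidean) UNIV)
      (PiE UNIV (\<lambda>_. {0..1::real}) :: ('b \<Rightarrow> real) set)"
    by (simp add: compactin_PiE compactin_euclidean_iff)
  then show ?thesis by (simp add: euclidean_product_topology compactin_euclidean_iff)
qed

lemma approx_couplings_le_1:
  assumes "r \<in> approx_couplings p q R F"
  shows "r z \<in> {0..1}"
proof -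
  have "r z \<le> (\<Sum>y\<in>{snd z}. r (fst z, y))" by simp
  also have "\<dots> \<le> pmf p (fst z)" by (rule approx_couplingsD(3)[OF assms]) simp
  finally show ?thesis using approx_couplingsD(1)[OF assms] pmf_le_1[of p "fst z"] by auto
qed

lemma common_approx_coupling:
  assumes hall: "\<And>A. finite A \<Longrightarrow> measure_pmf.prob p A \<le> measure_pmf.prob q {y. \<exists>x\<in>A. R x y}"
  shows "\<exists>r. \<forall>F. finite F \<longrightarrow> r \<in> approx_couplings p q R F"
proof -
  define Z where "Z = (PiE UNIV (\<lambda>_. {0..1::real}) :: ('a \<times> 'a \<Rightarrow> real) set)"
  define \<F> where "\<F> = approx_couplings p q R ` {F. finite F}"
  have "Z \<inter> \<Inter>\<F> \<noteq> {}"
  proof (rule compact_imp_fip)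
    show "compact Z" unfolding Z_def by (rule compact_unit_cube)
    show "closed K" if "K \<in> \<F>" for K using that closed_approx_couplings unfolding \<F>_def by blast
    show "Z \<inter> \<Inter>\<F>' \<noteq> {}" if fin: "finite \<F>'" and sub: "\<F>' \<subseteq> \<F>" for \<F>'
    proof -
      obtain Fs where Fs: "Fs \<subseteq> {F. finite F}" "finite Fs" "\<F>' = approx_couplings p q R ` Fs"
        using finite_subset_image[OF fin sub[unfolded \<F>_def]] by blast
      have "finite (\<Union>Fs)" using Fs by auto
      then obtain r where r: "r \<in> approx_couplings p q R (\<Union>Fs)"
        using approx_couplings_nonempty[OF hall] by blast
      then have "r \<in> Z" unfolding Z_def using approx_couplings_le_1[OF r] by auto
      moreover have "r \<in> \<Inter>\<F>'" using Fs(3) r approx_couplings_antimono[of _ "\<Union>Fs"] by blast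
      ultimately show ?thesis by blast
    qed
  qed
  then show ?thesis unfolding \<F>_def by blast
qed

lemma nonneg_has_sum_if_finite_sums_approx:
  fixes g :: "'b \<Rightarrow> real"
  assumes nonneg: "\<And>y. 0 \<le> g y" and upper: "\<And>G. finite G \<Longrightarrow> sum g G \<le> c"
    and lower: "\<And>e. e > 0 \<Longrightarrow> \<exists>G. finite G \<and> c - e \<le> sum g G"
  shows "(g has_sum c) UNIV"
proof -
  have summable: "g summable_on UNIV"
    using nonneg upper by (intro nonneg_bdd_above_summable_on) (auto simp: bdd_above_def)
  have "infsum g UNIV \<le> c" using summable upper by (rule infsum_le_finite_sums) simp
  moreover have "c \<le> infsum g UNIV"
  proof (rule field_le_epsilon)
    fix e :: real assume "e > 0"
    then obtain G where G: "finite G" "c - e \<le> sum g G" using lower by blast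
    have "sum g G \<le> infsum g UNIV" using summable G(1)
      by (rule finite_sum_le_infsum) (auto simp: nonneg)
    then show "c \<le> infsum g UNIV + e" using G by linarith
  qed
  ultimately show ?thesis using summable by (simp add: has_sum_iff)
qed

lemma tails_small:
  assumes "e > 0"
  shows "\<exists>G. finite G \<and> tails p q G \<le> e"
proof -
  obtain G1 G2 where G: "finite G1" "measure_pmf.prob p (- G1) \<le> e / 2"
    "finite G2" "measure_pmf.prob q (- G2) \<le> e / 2"
    using measure_pmf_Compl_small[of "e / 2"] assms by (meson half_gt_zero)
  have "measure_pmf.prob p (- (G1 \<union> G2)) \<le> measure_pmf.prob p (- G1)"
    "measure_pmf.prob q (- (G1 \<union> G2)) \<le> measure_pmf.prob q (- G2)"
    by (auto intro!: measure_pmf.finite_measure_mono)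
  then have "tails p q (G1 \<union> G2) \<le> e" using G unfolding tails_def by linarith
  then show ?thesis using G by blast
qed

lemma has_sum_if_tails_bounds:
  fixes g :: "'a \<Rightarrow> real"
  assumes nonneg: "\<And>y. 0 \<le> g y" and upper: "\<And>G. finite G \<Longrightarrow> sum g G \<le> c"
    and lower: "\<And>G. finite G \<Longrightarrow> c - tails p q G - tails p q G \<le> sum g G"
  shows "(g has_sum c) UNIV"
proof (rule nonneg_has_sum_if_finite_sums_approx[OF nonneg upper])
  fix e :: real assume "e > 0"
  then obtain G where "finite G" "tails p q G \<le> e / 2" using tails_small[of "e / 2"] by auto
  then show "\<exists>G. finite G \<and> c - e \<le> sum g G" using lower[of G] by (intro exI[of _ G]) auto
qed

lemma embed_pmf_has_sum:
  assumes nonneg: "\<And>z. 0 \<le> r z" and total: "(r has_sum 1) UNIV"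
  shows "pmf (embed_pmf r) = r"
proof -
  have "Infinite_Sum.abs_summable_on r UNIV"
    using total nonneg by (simp add: has_sum_imp_summable)
  then have abs: "Infinite_Set_Sum.abs_summable_on r UNIV" using abs_summable_equivalent by blast
  have "infsetsum r UNIV = 1" using infsetsum_infsum[OF abs] total by (simp add: has_sum_iff)
  then have "(\<integral>\<^sup>+ z. ennreal (r z) \<partial>count_space UNIV) = 1"
    using nn_integral_conv_infsetsum[OF abs] nonneg by simp
  then show ?thesis by (intro ext pmf_embed_pmf[of r, OF nonneg])
qed

lemma pmf_map_fst_eq_infsum: "pmf (map_pmf fst \<rho>) x = (\<Sum>\<^sub>\<infinity>y. pmf \<rho> (x, y))"
proof -
  have "pmf (map_pmf fst \<rho>) x = (\<Sum>\<^sub>\<infinity>z\<in>fst -` {x}. pmf \<rho> z)"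
    by (simp add: pmf_map measure_pmf_eq_infsum)
  also have "fst -` {x} = range (Pair x)" by auto
  also have "(\<Sum>\<^sub>\<infinity>z\<in>range (Pair x). pmf \<rho> z) = (\<Sum>\<^sub>\<infinity>y. pmf \<rho> (x, y))"
    by (subst infsum_reindex) (auto simp: inj_on_def comp_def)
  finally show ?thesis .
qed

lemma pmf_map_snd_eq_infsum: "pmf (map_pmf snd \<rho>) y = (\<Sum>\<^sub>\<infinity>x. pmf \<rho> (x, y))"
proof -
  have "pmf (map_pmf snd \<rho>) y = (\<Sum>\<^sub>\<infinity>z\<in>snd -` {y}. pmf \<rho> z)"
    by (simp add: pmf_map measure_pmf_eq_infsum)
  also have "snd -` {y} = range (\<lambda>x. (x, y))" by auto
  also have "(\<Sum>\<^sub>\<infinity>z\<in>range (\<lambda>x. (x, y)). pmf \<rho> z) = (\<Sum>\<^sub>\<infinity>x. pmf \<rho> (x, y))"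
    by (subst infsum_reindex) (auto simp: inj_on_def comp_def)
  finally show ?thesis .
qed

lemma rel_pmf_if_finite_hall:
  fixes p q :: "'a pmf"
  assumes hall: "\<And>A. finite A \<Longrightarrow> measure_pmf.prob p A \<le> measure_pmf.prob q {y. \<exists>x\<in>A. R x y}"
  shows "rel_pmf R p q"
proof -
  obtain r where r: "\<And>F. finite F \<Longrightarrow> r \<in> approx_couplings p q R F"
    using common_approx_coupling[OF hall] by blast
  note rD = approx_couplingsD[OF r]
  have r_nonneg: "0 \<le> r z" for z using rD(1)[of "{}"] by simp
  have rows: "((\<lambda>y. r (x, y)) has_sum pmf p x) UNIV" for x
    using r_nonneg rD(3)[of "{}"] rD(4)[of G G for G]
      by (intro has_sum_if_tails_bounds[of _ _ p q]) auto
  have cols: "((\<lambda>x. r (x, y)) has_sum pmf q y) UNIV" for y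
    using r_nonneg rD(5)[of "{}"] rD(6)[of G G for G]
      by (intro has_sum_if_tails_bounds[of _ _ p q]) auto
  have "r summable_on UNIV \<times> UNIV"
    using rows pmf_summable_on r_nonneg by (rule summable_on_SigmaI)
  moreover have "(pmf p has_sum 1) UNIV" using has_sum_pmf[of p UNIV] by simp
  ultimately have "(r has_sum 1) (UNIV \<times> UNIV)" using rows by (intro has_sum_SigmaI)
  then have total: "(r has_sum 1) UNIV" by simp
  define \<rho> where "\<rho> = embed_pmf r"
  have pmf_\<rho>: "pmf \<rho> = r" unfolding \<rho>_def using r_nonneg total by (rule embed_pmf_has_sum)
  show ?thesis
  proof (rule rel_pmf.intros[of \<rho>])
    show "R x y" if "(x, y) \<in> set_pmf \<rho>" for x y
      using that rD(2)[of "{}" x y] pmf_\<rho> by (auto simp: set_pmf_eq)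
    show "map_pmf fst \<rho> = p"
      using rows by (intro pmf_eqI) (simp add: pmf_map_fst_eq_infsum pmf_\<rho> has_sum_iff)
    show "map_pmf snd \<rho> = q"
      using cols by (intro pmf_eqI) (simp add: pmf_map_snd_eq_infsum pmf_\<rho> has_sum_iff)
  qed
qed

section \<open>Couplings and stochastic domination\<close>

lemma order_compatible_iff_set_pmf: "order_compatible \<rho> \<longleftrightarrow> (\<forall>(x, y)\<in>set_pmf \<rho>. x \<le> y)"
  unfolding order_compatible_def
  by (subst measure_pmf.prob_eq_1) (auto simp: AE_measure_pmf_iff)

lemma compatible_coupling_iff_rel_pmf:
  "(\<exists>\<rho>. is_coupling \<rho> \<mu>1 \<mu>2 \<and> order_compatible \<rho>) \<longleftrightarrow> rel_pmf (\<le>) \<mu>1 \<mu>2"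
  unfolding is_coupling_def order_compatible_iff_set_pmf rel_pmf.simps by blast

lemma stoch_le_imp_measure_upset_le:
  assumes "stoch_le \<mu>1 \<mu>2" and upset: "\<And>x y. x \<in> U \<Longrightarrow> x \<le> y \<Longrightarrow> y \<in> U"
  shows "measure_pmf.prob \<mu>1 U \<le> measure_pmf.prob \<mu>2 U"
proof -
  have "bounded (range (indicator U :: 'a \<Rightarrow> real))"
    by (rule boundedI[of _ 1]) (auto simp: indicator_def)
  moreover have "mono (indicator U :: 'a \<Rightarrow> real)"
    using upset by (auto simp: mono_def indicator_def)
  ultimately show ?thesis using assms(1) unfolding stoch_le_def by fastforce
qed

lemma stoch_le_imp_rel_pmf:
  assumes "stoch_le \<mu>1 \<mu>2"
  shows "rel_pmf (\<le>) \<mu>1 \<mu>2"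
proof (rule rel_pmf_if_finite_hall)
  fix A :: "'a set"
  have "measure_pmf.prob \<mu>1 A \<le> measure_pmf.prob \<mu>1 {y. \<exists>x\<in>A. x \<le> y}"
    by (rule measure_pmf.finite_measure_mono) auto
  also have "\<dots> \<le> measure_pmf.prob \<mu>2 {y. \<exists>x\<in>A. x \<le> y}"
    using assms by (rule stoch_le_imp_measure_upset_le) (auto intro: order_trans)
  finally show "measure_pmf.prob \<mu>1 A \<le> measure_pmf.prob \<mu>2 {y. \<exists>x\<in>A. x \<le> y}" .
qed

lemma rel_pmf_imp_stoch_le:
  assumes "rel_pmf (\<le>) \<mu>1 \<mu>2"
  shows "stoch_le \<mu>1 \<mu>2"
  unfolding stoch_le_def
proof (intro allI impI)
  fix f :: "'a \<Rightarrow> real" assume "bounded (range f)" and mono: "mono f"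
  then obtain B where B: "\<And>x. \<bar>f x\<bar> \<le> B" unfolding bounded_real by blast
  obtain \<rho> where \<rho>: "\<And>x y. (x, y) \<in> set_pmf \<rho> \<Longrightarrow> x \<le> y" "map_pmf fst \<rho> = \<mu>1" "map_pmf snd \<rho> = \<mu>2"
    using assms by (auto elim: rel_pmf.cases)
  have "measure_pmf.expectation \<rho> (\<lambda>z. f (fst z)) \<le> measure_pmf.expectation \<rho> (\<lambda>z. f (snd z))"
    using \<rho>(1) mono
    by (intro integral_mono_AE measure_pmf.integrable_const_bound[where B = B])
       (auto simp: B AE_measure_pmf_iff mono_def)
  then show "measure_pmf.expectation \<mu>1 f \<le> measure_pmf.expectation \<mu>2 f"
    by (simp flip: \<rho>(2,3) add: integral_map_pmf)
qed

section \<open>Directed paths and path flows\<close>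

lemma directed_path_trancl:
  assumes "directed_path E g" "i < j" "j < length g"
  shows "(g ! i, g ! j) \<in> E\<^sup>+"
  using assms(2,3)
proof (induction j)
  case (Suc j)
  have "(g ! j, g ! Suc j) \<in> E" using assms(1) Suc.prems unfolding directed_path_def by blast
  then show ?case using Suc by (cases "i = j") (auto intro: trancl_into_trancl)
qed simp

lemma acyclic_directed_path_distinct:
  assumes "acyclic E" "directed_path E g"
  shows "distinct g"
  unfolding distinct_conv_nth
proof (intro allI impI)
  fix i j assume ij: "i < length g" "j < length g" "i \<noteq> j"
  have "(g ! k, g ! k) \<notin> E\<^sup>+" for k using assms(1) unfolding acyclic_def by blast
  then show "g ! i \<noteq> g ! j"
    using directed_path_trancl[OF assms(2), of i j] directed_path_trancl[OF assms(2), of j i] ij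
    by (metis linorder_neqE_nat)
qed

lemma directed_path_snoc:
  assumes "directed_path E g" "(last g, z) \<in> E"
  shows "directed_path E (g @ [z])"
  unfolding directed_path_def
proof (intro conjI allI impI)
  fix i assume i: "Suc i < length (g @ [z])"
  show "((g @ [z]) ! i, (g @ [z]) ! Suc i) \<in> E"
  proof (cases "Suc i < length g")
    case True
    then show ?thesis using assms(1) by (simp add: directed_path_def nth_append)
  next
    case False
    then have "i = length g - 1" "g \<noteq> []" using i assms(1) by (auto simp: directed_path_def)
    then show ?thesis using assms(2) by (simp add: nth_append last_conv_nth)
  qed
qed simp

lemma trancl_imp_directed_path:
  assumes "(x, y) \<in> E\<^sup>+"
  shows "\<exists>g. directed_path E g \<and> hd g = x \<and> last g = y"
  using assms
proof (induction rule: trancl_induct)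
  case (base y)
  have "directed_path E [x, y]" using base by (auto simp: directed_path_def less_Suc_eq)
  then show ?case by force
next
  case (step y z)
  then obtain g where g: "directed_path E g" "hd g = x" "last g = y" by blast
  then have "directed_path E (g @ [z]) \<and> hd (g @ [z]) = x \<and> last (g @ [z]) = z"
    using directed_path_snoc[OF g(1)] step(2) by (simp add: directed_path_def)
  then show ?case by blast
qed

lemma directed_path_hd_le_last:
  assumes order: "\<forall>x y. x \<noteq> y \<longrightarrow> (x \<le> y \<longleftrightarrow> (x, y) \<in> E\<^sup>+)" and g: "directed_path E g"
  shows "hd g \<le> last (g :: 'a::order list)"
proof (cases "hd g = last g")
  case False
  have "g \<noteq> []" using g by (simp add: directed_path_def)
  then have "1 < length g" using False by (cases g) auto
  then have "(g ! 0, g ! (length g - 1)) \<in> E\<^sup>+" by (intro directed_path_trancl[OF g]) auto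
  then show ?thesis using order False \<open>g \<noteq> []\<close> by (simp add: hd_conv_nth last_conv_nth)
qed simp

lemma path_flow_nonneg: "0 \<le> path_flow g x y"
  by (simp add: path_flow_def)

lemma path_flow_at_nth:
  assumes "distinct g" "Suc i < length g"
  shows "path_flow g (g ! i) y = (if y = g ! Suc i then 1 else 0)"
  using assms nth_eq_iff_index_eq[OF assms(1), of _ i] unfolding path_flow_def
  by (smt (verit) Suc_lessD)

lemma path_flow_rev: "path_flow (rev g) x y = path_flow g y x"
proof -
  have "(\<exists>i. Suc i < length g \<and> rev g ! i = x \<and> rev g ! Suc i = y) \<longleftrightarrow>
        (\<exists>j. Suc j < length g \<and> g ! j = y \<and> g ! Suc j = x)"
  proof
    assume "\<exists>i. Suc i < length g \<and> rev g ! i = x \<and> rev g ! Suc i = y"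
    then obtain i where "Suc i < length g" "rev g ! i = x" "rev g ! Suc i = y" by blast
    then show "\<exists>j. Suc j < length g \<and> g ! j = y \<and> g ! Suc j = x"
      by (intro exI[of _ "length g - Suc (Suc i)"]) (auto simp: rev_nth Suc_diff_Suc)
  next
    assume "\<exists>j. Suc j < length g \<and> g ! j = y \<and> g ! Suc j = x"
    then obtain j where "Suc j < length g" "g ! j = y" "g ! Suc j = x" by blast
    then show "\<exists>i. Suc i < length g \<and> rev g ! i = x \<and> rev g ! Suc i = y"
      by (intro exI[of _ "length g - Suc (Suc j)"]) (auto simp: rev_nth Suc_diff_Suc)
  qed
  then show ?thesis by (simp add: path_flow_def)
qed

lemma directed_path_rev:
  assumes "directed_path E g"
  shows "directed_path (E\<inverse>) (rev g)"
  unfolding directed_path_def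
proof (intro conjI allI impI)
  fix i assume i: "Suc i < length (rev g)"
  define j where "j = length g - Suc (Suc i)"
  have j: "Suc j < length g" "Suc j = length g - Suc i" using i by (auto simp: j_def)
  have "(g ! j, g ! Suc j) \<in> E" using assms j(1) unfolding directed_path_def by blast
  moreover have "rev g ! i = g ! Suc j" "rev g ! Suc i = g ! j" using i j
    by (simp_all add: rev_nth j_def)
  ultimately show "(rev g ! i, rev g ! Suc i) \<in> E\<inverse>" by simp
qed (use assms in \<open>simp add: directed_path_def\<close>)

lemma has_sum_path_flow_out:
  assumes g: "directed_path E g" "distinct g"
  shows "((\<lambda>y. path_flow g x y) has_sum (if x \<in> set g \<and> x \<noteq> last g then 1 else 0)) {y. (x, y) \<in> E}"
proof (cases "\<exists>i. Suc i < length g \<and> g ! i = x")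
  case True
  then obtain i where i: "Suc i < length g" "x = g ! i" by auto
  have "(x, g ! Suc i) \<in> E" using g(1) i unfolding directed_path_def by blast
  moreover have "x \<in> set g \<and> x \<noteq> last g"
  proof
    show "x \<in> set g" using i by simp
    have "g ! i \<noteq> g ! (length g - 1)" using nth_eq_iff_index_eq[OF g(2)] i(1) by simp
    moreover have "last g = g ! (length g - 1)" using i(1) by (intro last_conv_nth) auto
    ultimately show "x \<noteq> last g" unfolding i(2) by argo
  qed
  ultimately show ?thesis unfolding i(2) path_flow_at_nth[OF g(2) i(1)]
    by (intro has_sum_finite_neutralI[where B = "{g ! Suc i}"]) auto
next
  case False
  then have "path_flow g x y = 0" for y unfolding path_flow_def by auto
  moreover have "\<not> (x \<in> set g \<and> x \<noteq> last g)"
  proof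
    assume x: "x \<in> set g \<and> x \<noteq> last g"
    then obtain i where i: "i < length g" "g ! i = x" by (auto simp: in_set_conv_nth)
    then have "i = length g - 1" using False by (cases "Suc i < length g") auto
    moreover have "g \<noteq> []" using i by auto
    ultimately have "x = last g" using i by (simp add: last_conv_nth)
    then show False using x by blast
  qed
  ultimately show ?thesis by auto
qed

lemma has_sum_path_flow_in:
  assumes g: "directed_path E g" "distinct g"
  shows "((\<lambda>y. path_flow g y x) has_sum (if x \<in> set g \<and> x \<noteq> hd g then 1 else 0)) {y. (y, x) \<in> E}"
  using has_sum_path_flow_out[OF directed_path_rev[OF g(1)], of x] g(2)
  by (simp add: path_flow_rev last_rev)

section \<open>Superpositions of path flows\<close>

definition path_divergence :: "'a list \<Rightarrow> 'a \<Rightarrow> real" where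
  "path_divergence g x = (if x = hd g then 1 else 0) - (if x = last g then 1 else 0)"

lemma summable_on_mult_bounded:
  fixes q :: "'i \<Rightarrow> real"
  assumes "\<And>n. n \<in> I \<Longrightarrow> 0 \<le> q n" "q summable_on I" "\<And>n. n \<in> I \<Longrightarrow> c n \<in> {0..1}"
  shows "(\<lambda>n. q n * c n) summable_on I"
  using assms(2) by (rule summable_on_comparison_test) (use assms in \<open>auto simp: mult_left_le\<close>)

lemma has_sum_swap_mixture:
  fixes q :: "'i \<Rightarrow> real" and \<phi> :: "'i \<Rightarrow> 'b \<Rightarrow> real"
  assumes q: "\<And>n. n \<in> I \<Longrightarrow> 0 \<le> q n" "q summable_on I"
    and \<phi>: "\<And>n y. 0 \<le> \<phi> n y" "\<And>n. n \<in> I \<Longrightarrow> (\<phi> n has_sum c n) D" "\<And>n. n \<in> I \<Longrightarrow> c n \<in> {0..1}"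
    and Q: "\<And>y. y \<in> D \<Longrightarrow> ((\<lambda>n. q n * \<phi> n y) has_sum Q y) I"
  shows "(Q has_sum (\<Sum>\<^sub>\<infinity>n\<in>I. q n * c n)) D"
proof -
  define H where "H = (\<lambda>(n, y). q n * \<phi> n y)"
  have rows: "((\<lambda>y. H (n, y)) has_sum q n * c n) D" if "n \<in> I" for n
    unfolding H_def using has_sum_cmult_right[OF \<phi>(2)[OF that]] by simp
  have "H summable_on I \<times> D"
    using rows summable_on_mult_bounded[OF q \<phi>(3)] q(1) \<phi>(1)
    by (intro summable_on_SigmaI[where g = "\<lambda>n. q n * c n"]) (auto simp: H_def)
  then have "(H has_sum (\<Sum>\<^sub>\<infinity>n\<in>I. q n * c n)) (I \<times> D)"
    using rows summable_on_mult_bounded[OF q \<phi>(3)]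
    by (intro has_sum_SigmaI[OF rows]) (simp_all add: has_sum_infsum)
  then have "((\<lambda>(y, n). H (n, y)) has_sum (\<Sum>\<^sub>\<infinity>n\<in>I. q n * c n)) (D \<times> I)"
    by (subst (asm) has_sum_swap)
  then show ?thesis by (rule has_sum_SigmaD) (use Q in \<open>auto simp: H_def\<close>)
qed

lemma has_sum_diff:
  fixes f g :: "'a \<Rightarrow> 'b::topological_ab_group_add"
  assumes "(f has_sum a) A" "(g has_sum b) A"
  shows "((\<lambda>x. f x - g x) has_sum (a - b)) A"
  using has_sum_add[OF assms(1) has_sum_uminus[of g A "- b", THEN iffD2]] assms(2) by simp

lemma divergence_path_mixture:
  fixes \<gamma> :: "'i \<Rightarrow> 'a list" and q :: "'i \<Rightarrow> real"
  assumes paths: "\<And>n. n \<in> I \<Longrightarrow> directed_path E (\<gamma> n) \<and> distinct (\<gamma> n)"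
    and q: "\<And>n. n \<in> I \<Longrightarrow> 0 \<le> q n" "q summable_on I"
    and Q: "\<And>x y. (x, y) \<in> E \<Longrightarrow> ((\<lambda>n. q n * path_flow (\<gamma> n) x y) has_sum Q x y) I"
  shows "div_defined E Q x" and "divergence E Q x = (\<Sum>\<^sub>\<infinity>n\<in>I. q n * path_divergence (\<gamma> n) x)"
proof -
  define out where "out n = (if x \<in> set (\<gamma> n) \<and> x \<noteq> last (\<gamma> n) then 1 else 0 :: real)" for n
  define inc where "inc n = (if x \<in> set (\<gamma> n) \<and> x \<noteq> hd (\<gamma> n) then 1 else 0 :: real)" for n
  have out: "((\<lambda>y. Q x y) has_sum (\<Sum>\<^sub>\<infinity>n\<in>I. q n * out n)) {y. (x, y) \<in> E}"
  proof (rule has_sum_swap_mixture[OF q path_flow_nonneg])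
    show "((\<lambda>y. path_flow (\<gamma> n) x y) has_sum out n) {y. (x, y) \<in> E}" if "n \<in> I" for n
      unfolding out_def using paths[OF that] by (blast intro: has_sum_path_flow_out)
  qed (use Q in \<open>auto simp: out_def\<close>)
  have inc: "((\<lambda>y. Q y x) has_sum (\<Sum>\<^sub>\<infinity>n\<in>I. q n * inc n)) {y. (y, x) \<in> E}"
  proof (rule has_sum_swap_mixture[OF q path_flow_nonneg])
    show "((\<lambda>y. path_flow (\<gamma> n) y x) has_sum inc n) {y. (y, x) \<in> E}" if "n \<in> I" for n
      unfolding inc_def using paths[OF that] by (blast intro: has_sum_path_flow_in)
  qed (use Q in \<open>auto simp: inc_def\<close>)
  show "div_defined E Q x" unfolding div_defined_def using out inc
    by (auto dest: has_sum_imp_summable)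
  have "((\<lambda>n. q n * out n - q n * inc n) has_sum
      (\<Sum>\<^sub>\<infinity>n\<in>I. q n * out n) - (\<Sum>\<^sub>\<infinity>n\<in>I. q n * inc n)) I"
    using summable_on_mult_bounded[OF q, of out] summable_on_mult_bounded[OF q, of inc]
    by (intro has_sum_diff) (auto simp: out_def inc_def)
  moreover have "q n * out n - q n * inc n = q n * path_divergence (\<gamma> n) x" if "n \<in> I" for n
    using paths[OF that] by (auto simp: out_def inc_def path_divergence_def directed_path_def)
  ultimately have "((\<lambda>n. q n * path_divergence (\<gamma> n) x) has_sum
      (\<Sum>\<^sub>\<infinity>n\<in>I. q n * out n) - (\<Sum>\<^sub>\<infinity>n\<in>I. q n * inc n)) I"
    by (simp cong: has_sum_cong)
  moreover have "divergence E Q x = (\<Sum>\<^sub>\<infinity>n\<in>I. q n * out n) - (\<Sum>\<^sub>\<infinity>n\<in>I. q n * inc n)"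
    unfolding divergence_def using infsumI[OF out] infsumI[OF inc] by simp
  ultimately show "divergence E Q x = (\<Sum>\<^sub>\<infinity>n\<in>I. q n * path_divergence (\<gamma> n) x)"
    by (simp add: infsumI)
qed

lemma finitely_decomposableI_countable:
  fixes \<gamma> :: "'i::countable \<Rightarrow> 'a list" and q :: "'i \<Rightarrow> real"
  assumes paths: "\<And>n. n \<in> J \<Longrightarrow> directed_path E (\<gamma> n) \<and> distinct (\<gamma> n) \<and> 0 \<le> q n"
    and q: "q summable_on J"
    and Q: "\<And>x y. (x, y) \<in> E \<Longrightarrow> ((\<lambda>n. q n * path_flow (\<gamma> n) x y) has_sum Q x y) J"
  shows "finitely_decomposable E Q"
  unfolding finitely_decomposable_def self_avoiding_def
proof (intro exI conjI ballI allI impI)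
  have inj: "inj_on to_nat J" by (simp add: inj_on_def)
  show "q \<circ> from_nat summable_on to_nat ` J"
    using q by (simp add: summable_on_reindex[OF inj] comp_def)
  show "((\<lambda>n. (q \<circ> from_nat) n * path_flow ((\<gamma> \<circ> from_nat) n) x y) has_sum Q x y) (to_nat ` J)"
    if "(x, y) \<in> E" for x y
    using Q[OF that] by (simp add: has_sum_reindex[OF inj] comp_def)
qed (use paths in auto)

text \<open>Pairs that are not strictly ordered get a one-vertex path, which carries no flow.\<close>

definition order_path :: "('a::order \<times> 'a) set \<Rightarrow> 'a \<times> 'a \<Rightarrow> 'a list" where
  "order_path E z = (if fst z < snd z
     then (SOME g. directed_path E g \<and> hd g = fst z \<and> last g = snd z) else [fst z])"

lemma order_path_correct:
  fixes E :: "('a::order \<times> 'a) set"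
  assumes acyclic: "acyclic E" and order: "\<forall>x y. x \<noteq> y \<longrightarrow> (x \<le> y \<longleftrightarrow> (x, y) \<in> E\<^sup>+)"
  shows "directed_path E (order_path E z)" and "distinct (order_path E z)"
    and "fst z \<le> snd z \<Longrightarrow> hd (order_path E z) = fst z \<and> last (order_path E z) = snd z"
proof -
  have "directed_path E (order_path E z) \<and>
      (fst z \<le> snd z \<longrightarrow> hd (order_path E z) = fst z \<and> last (order_path E z) = snd z)"
  proof (cases "fst z < snd z")
    case True
    then have "\<exists>g. directed_path E g \<and> hd g = fst z \<and> last g = snd z"
      using order by (intro trancl_imp_directed_path) (auto simp: less_le)
    from someI_ex[OF this] show ?thesis using True unfolding order_path_def by simp
  qed (auto simp: order_path_def directed_path_def)
  then show "directed_path E (order_path E z)"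
    and "fst z \<le> snd z \<Longrightarrow> hd (order_path E z) = fst z \<and> last (order_path E z) = snd z"
    by auto
  then show "distinct (order_path E z)" using acyclic by (intro acyclic_directed_path_distinct)
qed

lemma has_sum_pmf_indicator:
  "((\<lambda>z. pmf p z * (if P z then 1 else 0)) has_sum measure_pmf.prob p {z. P z}) UNIV"
  using has_sum_pmf[of p "{z. P z}"] by (rule has_sum_cong_neutral[THEN iffD1, rotated -1]) auto

lemma has_sum_marginal_diff:
  "((\<lambda>z. pmf \<rho> z * ((if x = fst z then 1 else 0) - (if x = snd z then 1 else 0))) has_sum
     pmf (map_pmf fst \<rho>) x - pmf (map_pmf snd \<rho>) x) UNIV"
  using has_sum_diff[OF has_sum_pmf_indicator[of \<rho> "\<lambda>z. x = fst z"]
      has_sum_pmf_indicator[of \<rho> "\<lambda>z. x = snd z"]]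
  by (simp add: pmf_map vimage_def right_diff_distrib eq_commute[of x])

lemma rel_pmf_imp_decomposable_flow:
  fixes E :: "('a::{countable, order} \<times> 'a) set"
  assumes acyclic: "acyclic E" and order: "\<forall>x y. x \<noteq> y \<longrightarrow> (x \<le> y \<longleftrightarrow> (x, y) \<in> E\<^sup>+)"
    and rel: "rel_pmf (\<le>) \<mu>1 \<mu>2"
  shows "\<exists>Q. is_flow E Q \<and> finitely_decomposable E Q \<and>
           (\<forall>x. div_defined E Q x \<and> divergence E Q x = pmf \<mu>1 x - pmf \<mu>2 x)"
proof -
  obtain \<rho> where \<rho>: "\<And>x y. (x, y) \<in> set_pmf \<rho> \<Longrightarrow> x \<le> y" "map_pmf fst \<rho> = \<mu>1" "map_pmf snd \<rho> = \<mu>2"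
    using rel by (auto elim: rel_pmf.cases)
  define Q where "Q x y = (\<Sum>\<^sub>\<infinity>z. pmf \<rho> z * path_flow (order_path E z) x y)" for x y
  note paths = order_path_correct[OF acyclic order]
  have Q_has_sum: "((\<lambda>z. pmf \<rho> z * path_flow (order_path E z) x y) has_sum Q x y) UNIV" for x y
    unfolding Q_def using pmf_summable_on
    by (intro has_sum_infsum summable_on_mult_bounded) (auto simp: path_flow_def)
  have "is_flow E Q"
    unfolding is_flow_def Q_def
    by (intro allI impI infsum_nonneg mult_nonneg_nonneg pmf_nonneg path_flow_nonneg)
  moreover have "finitely_decomposable E Q"
    using paths pmf_summable_on Q_has_sum
    by (intro finitely_decomposableI_countable[where J = UNIV and \<gamma> = "order_path E"
          and q = "pmf \<rho>"]) auto
  moreover have "div_defined E Q x \<and> divergence E Q x = pmf \<mu>1 x - pmf \<mu>2 x" for x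
  proof -
    note mixture = divergence_path_mixture[where I = UNIV and \<gamma> = "order_path E" and q = "pmf \<rho>"]
    have "div_defined E Q x" using paths pmf_summable_on Q_has_sum by (intro mixture) auto
    have "divergence E Q x = (\<Sum>\<^sub>\<infinity>z. pmf \<rho> z * path_divergence (order_path E z) x)"
      using paths pmf_summable_on Q_has_sum by (intro mixture) auto
    also have "\<dots> = (\<Sum>\<^sub>\<infinity>z. pmf \<rho> z * ((if x = fst z then 1 else 0) - (if x = snd z then 1 else 0)))"
    proof (rule infsum_cong)
      fix z :: "'a \<times> 'a"
      show "pmf \<rho> z * path_divergence (order_path E z) x =
          pmf \<rho> z * ((if x = fst z then 1 else 0) - (if x = snd z then 1 else 0))"
        using paths(3)[of z] \<rho>(1)[of "fst z" "snd z"]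
        by (cases "z \<in> set_pmf \<rho>") (auto simp: path_divergence_def set_pmf_iff)
    qed
    also have "\<dots> = pmf \<mu>1 x - pmf \<mu>2 x"
      using has_sum_marginal_diff[of \<rho> x] \<rho>(2,3) by (simp add: infsumI)
    finally show ?thesis using \<open>div_defined E Q x\<close> by blast
  qed
  ultimately show ?thesis by blast
qed

lemma has_sum_expectation_pmf:
  fixes f :: "'a \<Rightarrow> real"
  assumes B: "\<And>x. \<bar>f x\<bar> \<le> B"
  shows "((\<lambda>x. pmf p x * f x) has_sum measure_pmf.expectation p f) UNIV"
proof -
  have "(\<lambda>x. norm (pmf p x * f x)) summable_on UNIV"
  proof (rule summable_on_comparison_test[OF summable_on_cmult_right[OF pmf_summable_on, of B]])
    show "norm (pmf p x * f x) \<le> B * pmf p x" for x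
      using mult_right_mono[OF B[of x] pmf_nonneg[of p x]] by (simp add: abs_mult mult.commute)
  qed simp
  then have "(\<lambda>x. pmf p x * f x) summable_on UNIV"
    and abs: "Infinite_Set_Sum.abs_summable_on (\<lambda>x. pmf p x * f x) UNIV"
    using abs_summable_summable abs_summable_equivalent by blast+
  then show ?thesis
    using pmf_expectation_eq_infsetsum[of p f] infsetsum_infsum[OF abs] by (simp add: has_sum_iff)
qed

lemma has_sum_path_divergence:
  fixes f :: "'a \<Rightarrow> real"
  shows "((\<lambda>x. c * path_divergence g x * f x) has_sum c * (f (hd g) - f (last g))) UNIV"
  by (cases "hd g = last g"; rule has_sum_finite_neutralI[where B = "{hd g, last g}"])
     (auto simp: path_divergence_def algebra_simps)

lemma has_sum_path_endpoints:
  fixes c :: real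
  shows "((\<lambda>x. c * ((if x = hd g then 1 else 0) + (if x = last g then 1 else 0))) has_sum 2 * c)
           UNIV"
  by (cases "hd g = last g"; rule has_sum_finite_neutralI[where B = "{hd g, last g}"]) auto

lemma expectation_diff_path_mixture:
  fixes \<gamma> :: "'i \<Rightarrow> 'a list" and q :: "'i \<Rightarrow> real" and f :: "'a \<Rightarrow> real"
  assumes q: "\<And>n. n \<in> I \<Longrightarrow> 0 \<le> q n" "q summable_on I" and B: "\<And>x. \<bar>f x\<bar> \<le> B"
    and diff: "\<And>x. pmf \<mu>1 x - pmf \<mu>2 x = (\<Sum>\<^sub>\<infinity>n\<in>I. q n * path_divergence (\<gamma> n) x)"
  shows "measure_pmf.expectation \<mu>1 f - measure_pmf.expectation \<mu>2 f =
           (\<Sum>\<^sub>\<infinity>n\<in>I. q n * (f (hd (\<gamma> n)) - f (last (\<gamma> n))))"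
proof -
  define H where "H = (\<lambda>(n, x). q n * path_divergence (\<gamma> n) x * f x)"
  define D where "D = (\<lambda>(n, x). q n * B *
      ((if x = hd (\<gamma> n) then 1 else 0) + (if x = last (\<gamma> n) then 1 else 0)))"
  have "0 \<le> B" using B[of undefined] by linarith
  have "D summable_on I \<times> UNIV"
    using has_sum_path_endpoints[of "q _ * B"] summable_on_cmult_right[OF q(2), of "2 * B"] q(1)
      \<open>0 \<le> B\<close>
    by (intro summable_on_SigmaI[where g = "\<lambda>n. 2 * (q n * B)"]) (auto simp: D_def mult_ac)
  moreover have "norm (H z) \<le> D z" if mem: "z \<in> I \<times> UNIV" for z
  proof -
    obtain n x where z: "z = (n, x)" "n \<in> I" using mem by (cases z) auto
    define e :: real where "e = (if x = hd (\<gamma> n) then 1 else 0) + (if x = last (\<gamma> n) then 1 else 0)"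
    have "\<bar>path_divergence (\<gamma> n) x\<bar> \<le> e" by (simp add: path_divergence_def e_def)
    then have "\<bar>path_divergence (\<gamma> n) x\<bar> * \<bar>f x\<bar> \<le> e * B"
      by (rule mult_mono) (auto simp: B e_def)
    then have "q n * (\<bar>path_divergence (\<gamma> n) x\<bar> * \<bar>f x\<bar>) \<le> q n * (e * B)"
      using q(1)[OF z(2)] by (rule mult_left_mono)
    moreover have "norm (H z) = q n * (\<bar>path_divergence (\<gamma> n) x\<bar> * \<bar>f x\<bar>)"
      using q(1)[OF z(2)] unfolding z H_def by (simp add: abs_mult)
    moreover have "D z = q n * (e * B)" unfolding z D_def e_def by (simp add: mult_ac)
    ultimately show ?thesis by simp
  qed
  ultimately have "H summable_on I \<times> UNIV"
    by (rule abs_summable_summable[OF Infinite_Sum.abs_summable_on_comparison_test'])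
  then have "(\<Sum>\<^sub>\<infinity>n\<in>I. \<Sum>\<^sub>\<infinity>x. H (n, x)) = (\<Sum>\<^sub>\<infinity>x. \<Sum>\<^sub>\<infinity>n\<in>I. H (n, x))"
    using infsum_swap_banach[of "\<lambda>n x. H (n, x)"] by simp
  moreover have "(\<Sum>\<^sub>\<infinity>x. H (n, x)) = q n * (f (hd (\<gamma> n)) - f (last (\<gamma> n)))" for n
    unfolding H_def using infsumI[OF has_sum_path_divergence] by simp
  moreover have "(\<Sum>\<^sub>\<infinity>n\<in>I. H (n, x)) = (pmf \<mu>1 x - pmf \<mu>2 x) * f x" for x
    unfolding H_def diff by (simp add: infsum_cmult_left')
  moreover have "((\<lambda>x. (pmf \<mu>1 x - pmf \<mu>2 x) * f x) has_sum
      measure_pmf.expectation \<mu>1 f - measure_pmf.expectation \<mu>2 f) UNIV"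
    using has_sum_diff[OF has_sum_expectation_pmf[OF B] has_sum_expectation_pmf[OF B]]
    by (simp add: left_diff_distrib)
  ultimately show ?thesis by (simp add: infsumI)
qed

lemma decomposable_flow_imp_stoch_le:
  fixes E :: "('a::order \<times> 'a) set"
  assumes order: "\<forall>x y. x \<noteq> y \<longrightarrow> (x \<le> y \<longleftrightarrow> (x, y) \<in> E\<^sup>+)"
    and decomposable: "finitely_decomposable E Q"
    and div: "\<And>x. divergence E Q x = pmf \<mu>1 x - pmf \<mu>2 x"
  shows "stoch_le \<mu>1 \<mu>2"
proof -
  obtain I :: "nat set" and \<gamma> q where
    paths: "\<And>n. n \<in> I \<Longrightarrow> directed_path E (\<gamma> n) \<and> distinct (\<gamma> n) \<and> 0 \<le> q n"
    and q: "q summable_on I"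
    and Q: "\<And>x y. (x, y) \<in> E \<Longrightarrow> ((\<lambda>n. q n * path_flow (\<gamma> n) x y) has_sum Q x y) I"
    using decomposable unfolding finitely_decomposable_def self_avoiding_def by blast
  have diff: "pmf \<mu>1 x - pmf \<mu>2 x = (\<Sum>\<^sub>\<infinity>n\<in>I. q n * path_divergence (\<gamma> n) x)" for x
    unfolding div[symmetric] using paths q Q by (intro divergence_path_mixture) auto
  show ?thesis
    unfolding stoch_le_def
  proof (intro allI impI)
    fix f :: "'a \<Rightarrow> real" assume "bounded (range f)" and "mono f"
    then obtain B where B: "\<And>x. \<bar>f x\<bar> \<le> B" unfolding bounded_real by blast
    have "measure_pmf.expectation \<mu>1 f - measure_pmf.expectation \<mu>2 f =
        (\<Sum>\<^sub>\<infinity>n\<in>I. q n * (f (hd (\<gamma> n)) - f (last (\<gamma> n))))"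
      using paths q B diff by (intro expectation_diff_path_mixture) auto
    also have "\<dots> = - (\<Sum>\<^sub>\<infinity>n\<in>I. q n * (f (last (\<gamma> n)) - f (hd (\<gamma> n))))"
      by (simp flip: infsum_uminus add: algebra_simps)
    also have "\<dots> \<le> 0"
      using paths directed_path_hd_le_last[OF order] \<open>mono f\<close>
      by (simp add: infsum_nonneg monoD)
    finally show "measure_pmf.expectation \<mu>1 f \<le> measure_pmf.expectation \<mu>2 f" by simp
  qed
qed

theorem theorem2p3:
  fixes E :: "('a::{countable, order} \<times> 'a) set"
    and \<mu>1 \<mu>2 :: "'a pmf"
  assumes "infinite (UNIV :: 'a set)"
    and "\<forall>x. (x, x) \<notin> E"
    and "acyclic E"
    and "\<forall>x y. x \<noteq> y \<longrightarrow> (x \<le> y \<longleftrightarrow> (x, y) \<in> E\<^sup>+)"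
  shows "(stoch_le \<mu>1 \<mu>2 \<longleftrightarrow> (\<exists>\<rho>. is_coupling \<rho> \<mu>1 \<mu>2 \<and> order_compatible \<rho>))
       \<and> ((\<exists>\<rho>. is_coupling \<rho> \<mu>1 \<mu>2 \<and> order_compatible \<rho>) \<longleftrightarrow>
          (\<exists>Q. is_flow E Q \<and> finitely_decomposable E Q \<and>
               (\<forall>x. div_defined E Q x \<and> divergence E Q x = pmf \<mu>1 x - pmf \<mu>2 x)))"
proof -
  have "stoch_le \<mu>1 \<mu>2 \<longleftrightarrow> rel_pmf (\<le>) \<mu>1 \<mu>2"
    using stoch_le_imp_rel_pmf rel_pmf_imp_stoch_le by blast
  moreover have "rel_pmf (\<le>) \<mu>1 \<mu>2 \<longleftrightarrow> (\<exists>Q. is_flow E Q \<and> finitely_decomposable E Q \<and>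
      (\<forall>x. div_defined E Q x \<and> divergence E Q x = pmf \<mu>1 x - pmf \<mu>2 x))"
    using rel_pmf_imp_decomposable_flow[OF assms(3,4)]
      decomposable_flow_imp_stoch_le[OF assms(4)] stoch_le_imp_rel_pmf by blast
  ultimately show ?thesis unfolding compatible_coupling_iff_rel_pmf by blast
qed

end
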